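(* Let $U=\sum_{j=0}^3 c_j\sigma_j\otimes\sigma_j$ be a normalized two-qubit unitary (see context). For $\alpha,\beta\in[0,\pi/2]$, $\theta\in[0,2\pi)$, $\mu\in(0,\pi/2]$ let $$|\psi(\alpha;\theta,\mu)\rangle=\cos\alpha|0,0\rangle+\sin\alpha|1\rangle(e^{i\theta}\cos\mu|0\rangle+\sin\mu|1\rangle)\in\mathcal H_A\otimes\mathcal H_{R_A},$$ $$|\phi(\beta)\rangle=\cos\beta|0,0\rangle+\sin\beta|1,1\rangle\in\mathcal H_B\otimes\mathcal H_{R_B},$$ with $R_A,R_B$ qubits. Suppose that the maximum defining $K_E(U)$ is attained at an input state of the form $|\psi(\alpha;\theta,\mu)\rangle_{AR_A}\otimes|\phi(\beta)\rangle_{BR_B}$ for some parameters. Then the maximum is also attained at an input of the form $(\cos\alpha|00\rangle+\sin\alpha|11\rangle)_{AR_A}\otimes(\cos\beta|00\rangle+\sin\beta|11\rangle)_{BR_B}$, i.e. $K_E(U)=\max_{\alpha,\beta\in[0,\pi/2]}E(\varphi(\alpha,\beta;\tfrac{\pi}{2},\tfrac{\pi}{2}))$.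
   Context: Pauli matrices: $\sigma_0=I$, $\sigma_1=\begin{pmatrix}0&1\\1&0\end{pmatrix}$, $\sigma_2=\begin{pmatrix}0&-i\\i&0\end{pmatrix}$, $\sigma_3=\begin{pmatrix}1&0\\0&-1\end{pmatrix}$. For real $x,y,z$ set $c_0=\cos x\cos y\cos z+i\sin x\sin y\sin z$, $c_1=\cos x\sin y\sin z+i\sin x\cos y\cos z$, $c_2=\sin x\cos y\sin z+i\cos x\sin y\cos z$, $c_3=\sin x\sin y\cos z+i\cos x\cos y\sin z$, and $U=\sum_{j=0}^3c_j\sigma_j\otimes\sigma_j$ acting on qubits $A,B$. $U$ is called normalized if $\pi/4\ge x\ge y\ge z\ge0$ and $0<y<\pi/4$. For a bipartite unitary $U$ on $\mathcal H_A\otimes\mathcal H_B$, the entangling power is $K_E(U)=\max E\big(U(|\phi\rangle_{AR_A}\otimes|\psi\rangle_{BR_B})\big)$, the maximum over pure states on $AR_A$ and $BR_B$ with arbitrary finite-dimensional ancillas $R_A,R_B$ ($U$ acting on $A,B$), where for a pure state $|\chi\rangle$ on $AR_A\otimes BR_B$, $E(|\chi\rangle)=S(\mathrm{Tr}_{AR_A}|\chi\rangle\langle\chi|)$ is the von Neumann entropy with base-2 logarithm (in ebits). $E(\varphi(\alpha,\beta;\frac{\pi}{2},\frac{\pi}{2}))$ denotes $E$ of $U\big((\cos\alpha|00\rangle+\sin\alpha|11\rangle)_{AR_A}\otimes(\cos\beta|00\rangle+\sin\beta|11\rangle)_{BR_B}\big)$ with $R_A,R_B$ qubits. *)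

theory Defs
  imports Complex_Main "Jordan_Normal_Form.Char_Poly"
begin

text \<open>Pauli matrices sigma_j, entries indexed by 0/1 (row, column).\<close>
definition pauli :: "nat \<Rightarrow> nat \<Rightarrow> nat \<Rightarrow> complex" where
  "pauli j k l =
     (if j = 0 then (if k = l then 1 else 0)
      else if j = 1 then (if k \<noteq> l then 1 else 0)
      else if j = 2 then (if k = 0 \<and> l = 1 then - \<i> else if k = 1 \<and> l = 0 then \<i> else 0)
      else (if k = l then (if k = 0 then 1 else -1) else 0))"

definition ccoef :: "real \<Rightarrow> real \<Rightarrow> real \<Rightarrow> nat \<Rightarrow> complex" where
  "ccoef x y z j =
     (if j = 0 then complex_of_real (cos x * cos y * cos z) + \<i> * complex_of_real (sin x * sin y * sin z)
      else if j = 1 then complex_of_real (cos x * sin y * sin z) + \<i> * complex_of_real (sin x * cos y * cos z)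
      else if j = 2 then complex_of_real (sin x * cos y * sin z) + \<i> * complex_of_real (cos x * sin y * cos z)
      else complex_of_real (sin x * sin y * cos z) + \<i> * complex_of_real (cos x * cos y * sin z))"

text \<open>Matrix entry <a b| U |a' b'> of U = sum_j c_j sigma_j (x) sigma_j on qubits A,B.\<close>
definition Uent :: "real \<Rightarrow> real \<Rightarrow> real \<Rightarrow> nat \<Rightarrow> nat \<Rightarrow> nat \<Rightarrow> nat \<Rightarrow> complex" where
  "Uent x y z a b a' b' = (\<Sum>j<4. ccoef x y z j * pauli j a a' * pauli j b b')"

definition normalized :: "real \<Rightarrow> real \<Rightarrow> real \<Rightarrow> bool" where
  "normalized x y z \<longleftrightarrow> pi/4 \<ge> x \<and> x \<ge> y \<and> y \<ge> z \<and> z \<ge> 0 \<and> 0 < y \<and> y < pi/4"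

text \<open>A pure state on a qubit tensor an m-dimensional ancilla: amplitudes f a r, a<2, r<m.
  It is a unit vector if the squared norms of the amplitudes sum to 1.\<close>
definition unit_state :: "nat \<Rightarrow> (nat \<Rightarrow> nat \<Rightarrow> complex) \<Rightarrow> bool" where
  "unit_state m f \<longleftrightarrow> (\<Sum>a<2. \<Sum>r<m. (cmod (f a r))\<^sup>2) = 1"

text \<open>Amplitudes of U (|f>_{A R_A} (x) |g>_{B R_B}), indexed by (a, r, b, s).\<close>
definition out_state :: "real \<Rightarrow> real \<Rightarrow> real \<Rightarrow> (nat \<Rightarrow> nat \<Rightarrow> complex) \<Rightarrow> (nat \<Rightarrow> nat \<Rightarrow> complex)
    \<Rightarrow> nat \<Rightarrow> nat \<Rightarrow> nat \<Rightarrow> nat \<Rightarrow> complex" where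
  "out_state x y z f g a r b s = (\<Sum>a'<2. \<Sum>b'<2. Uent x y z a b a' b' * f a' r * g b' s)"

text \<open>Reduced density matrix on B R_B (partial trace over A R_A) of a pure state chi,
  with dim R_A = m, dim R_B = n; basis index of |b,s> is b*n+s.\<close>
definition reduced_BR :: "nat \<Rightarrow> nat \<Rightarrow> (nat \<Rightarrow> nat \<Rightarrow> nat \<Rightarrow> nat \<Rightarrow> complex) \<Rightarrow> complex mat" where
  "reduced_BR m n chi = mat (2*n) (2*n) (\<lambda>(i,j).
      \<Sum>a<2. \<Sum>r<m. chi a r (i div n) (i mod n) * cnj (chi a r (j div n) (j mod n)))"

text \<open>von Neumann entropy (base 2) of a density matrix: - sum of lambda log2 lambda over its
  eigenvalues with multiplicity (roots, via proots, of the characteristic polynomial), with 0 log 0 = 0.\<close>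
definition vn_entropy :: "complex mat \<Rightarrow> real" where
  "vn_entropy rho = sum_mset (image_mset (\<lambda>ev.
      (if Re ev > 0 then - Re ev * log 2 (Re ev) else 0)) (proots (char_poly rho)))"

text \<open>E(U(|f> (x) |g>)) with dim R_A = m, dim R_B = n.\<close>
definition ent_out :: "real \<Rightarrow> real \<Rightarrow> real \<Rightarrow> nat \<Rightarrow> nat \<Rightarrow> (nat \<Rightarrow> nat \<Rightarrow> complex) \<Rightarrow> (nat \<Rightarrow> nat \<Rightarrow> complex) \<Rightarrow> real" where
  "ent_out x y z m n f g = vn_entropy (reduced_BR m n (out_state x y z f g))"

definition ent_values :: "real \<Rightarrow> real \<Rightarrow> real \<Rightarrow> real set" where
  "ent_values x y z = {ent_out x y z m n f g | m n f g.
      m \<ge> 1 \<and> n \<ge> 1 \<and> unit_state m f \<and> unit_state n g}"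

text \<open>Entangling power K_E(U) (the maximum, written as a supremum).\<close>
definition K_E :: "real \<Rightarrow> real \<Rightarrow> real \<Rightarrow> real" where
  "K_E x y z = Sup (ent_values x y z)"

definition psi_state :: "real \<Rightarrow> real \<Rightarrow> real \<Rightarrow> nat \<Rightarrow> nat \<Rightarrow> complex" where
  "psi_state \<alpha> \<theta> \<mu> a r =
     (if a = 0 \<and> r = 0 then complex_of_real (cos \<alpha>)
      else if a = 1 \<and> r = 0 then complex_of_real (sin \<alpha> * cos \<mu>) * cis \<theta>
      else if a = 1 \<and> r = 1 then complex_of_real (sin \<alpha> * sin \<mu>)
      else 0)"

definition phi_state :: "real \<Rightarrow> nat \<Rightarrow> nat \<Rightarrow> complex" where
  "phi_state \<beta> b s =
     (if b = 0 \<and> s = 0 then complex_of_real (cos \<beta>)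
      else if b = 1 \<and> s = 1 then complex_of_real (sin \<beta>)
      else 0)"

end

theory Submission
  imports Defs "Jordan_Normal_Form.Schur_Decomposition"
    "HOL-Computational_Algebra.Fundamental_Theorem_Algebra"
begin

(* Every term sigma_j (x) sigma_j of U flips the qubits A and B together or leaves both alone, so
   U conserves the parity of a + b.  With |phi(beta)> on B R_B, the output amplitude at
   |a, r>|b, s> therefore only involves the input component |a'>_A with a' = a + b + s (mod 2).
   Consequently |psi(alpha; theta, mu)> and |phi(alpha)>, which have the same diagonal reduced
   state on A but differ in the coherence between |0>_A and |1>_A, yield reduced states on B R_B
   that agree on the entries of even parity; for |phi(alpha)> the entries of odd parity vanish.
   So the second reduced state is the pinching (rho + V rho V^dagger)/2 of the first one, where
   V = diag((-1)^(b + s)).  Pinching does not decrease the von Neumann entropy: by the spectral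
   theorem, the eigenvalues of the pinched state are a doubly stochastic average of those of rho,
   and t -> - t log t is concave.  Hence a maximiser of the form |psi> (x) |phi(beta)> can be
   replaced by |phi(alpha)> (x) |phi(beta)>. *)

section \<open>Adjoints and unitary matrices\<close>

lemma cnj_mult_self: "z * cnj z = (complex_of_real (cmod z))\<^sup>2"
  by (metis complex_norm_square of_real_power)

lemma mat_adjoint_dim [simp]:
  "dim_row (mat_adjoint A) = dim_col A" "dim_col (mat_adjoint A) = dim_row A"
  by (simp_all add: mat_adjoint_def)

lemma mat_adjoint_index [simp]:
  fixes A :: "complex mat"
  shows "i < dim_col A \<Longrightarrow> j < dim_row A \<Longrightarrow> mat_adjoint A $$ (i,j) = cnj (A $$ (j,i))"
  by (simp add: mat_adjoint_def mat_of_rows_index)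

lemma mat_adjoint_carrier [simp]: "A \<in> carrier_mat n m \<Longrightarrow> mat_adjoint A \<in> carrier_mat m n"
  unfolding carrier_mat_def by simp

lemma mat_adjoint_adjoint [simp]: "mat_adjoint (mat_adjoint A) = (A :: complex mat)"
  by (rule eq_matI) simp_all

lemma mat_adjoint_mult:
  fixes A B :: "complex mat"
  assumes "A \<in> carrier_mat n k" "B \<in> carrier_mat k m"
  shows "mat_adjoint (A * B) = mat_adjoint B * mat_adjoint A"
  by (rule eq_matI) (use assms in \<open>simp_all add: scalar_prod_def cnj_sum mult.commute\<close>)

lemma mat_adjoint_one [simp]: "mat_adjoint (1\<^sub>m n :: complex mat) = 1\<^sub>m n"
  by (rule eq_matI) simp_all

lemma mat_adjoint_zero [simp]: "mat_adjoint (0\<^sub>m n m :: complex mat) = 0\<^sub>m m n"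
  by (rule eq_matI) simp_all

lemma mat_adjoint_four_block_mat:
  fixes A B C D :: "complex mat"
  assumes "A \<in> carrier_mat n1 m1" "B \<in> carrier_mat n1 m2" "C \<in> carrier_mat n2 m1" "D \<in> carrier_mat n2 m2"
  shows "mat_adjoint (four_block_mat A B C D) =
    four_block_mat (mat_adjoint A) (mat_adjoint C) (mat_adjoint B) (mat_adjoint D)"
  by (rule eq_matI) (use assms in simp_all)

lemma mat_adjoint_add:
  fixes A B :: "complex mat"
  assumes "A \<in> carrier_mat n m" "B \<in> carrier_mat n m"
  shows "mat_adjoint (A + B) = mat_adjoint A + mat_adjoint B"
  by (rule eq_matI) (use assms in simp_all)

lemma mat_adjoint_smult:
  fixes A :: "complex mat"
  shows "mat_adjoint (c \<cdot>\<^sub>m A) = cnj c \<cdot>\<^sub>m mat_adjoint A"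
  by (rule eq_matI) simp_all

lemma diag_adjoint_mult_self:
  fixes H :: "complex mat"
  assumes "H \<in> carrier_mat p n" "k < n"
  shows "(mat_adjoint H * H) $$ (k,k) = of_real (\<Sum>l<p. (cmod (H $$ (l,k)))\<^sup>2)"
  using assms by (simp add: scalar_prod_def lessThan_atLeast0 cnj_mult_self mult.commute)

definition unitary :: "nat \<Rightarrow> complex mat \<Rightarrow> bool" where
  "unitary n U \<longleftrightarrow> U \<in> carrier_mat n n \<and> mat_adjoint U * U = 1\<^sub>m n \<and> U * mat_adjoint U = 1\<^sub>m n"

lemma unitaryI:
  assumes "U \<in> carrier_mat n n" "mat_adjoint U * U = 1\<^sub>m n"
  shows "unitary n U"
  using assms mat_mult_left_right_inverse[OF mat_adjoint_carrier[OF assms(1)] assms]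
  unfolding unitary_def by simp

lemma unitary_carrier: "unitary n U \<Longrightarrow> U \<in> carrier_mat n n"
  unfolding unitary_def by simp

lemma unitary_adjoint: "unitary n U \<Longrightarrow> unitary n (mat_adjoint U)"
  unfolding unitary_def by simp

lemma unitary_mult:
  assumes U: "unitary n U" and V: "unitary n V"
  shows "unitary n (U * V)"
proof (rule unitaryI)
  have c: "U \<in> carrier_mat n n" "V \<in> carrier_mat n n"
    using U V by (simp_all add: unitary_carrier)
  then show "U * V \<in> carrier_mat n n" by simp
  have "mat_adjoint (U * V) * (U * V) = mat_adjoint V * ((mat_adjoint U * U) * V)"
    using c by (simp add: mat_adjoint_mult[of _ n n _ n] assoc_mult_mat[of _ n n _ n _ n])
  then show "mat_adjoint (U * V) * (U * V) = 1\<^sub>m n"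
    using U V c unfolding unitary_def by simp
qed

lemma unitary_cancel:
  assumes U: "unitary n U" and X: "X \<in> carrier_mat n k"
  shows "mat_adjoint U * (U * X) = X" "U * (mat_adjoint U * X) = X"
proof -
  have c: "U \<in> carrier_mat n n" "mat_adjoint U \<in> carrier_mat n n"
    using U by (simp_all add: unitary_carrier)
  show "mat_adjoint U * (U * X) = X" "U * (mat_adjoint U * X) = X"
    using U X c by (simp_all add: assoc_mult_mat[symmetric, of _ n n _ n _ k] unitary_def)
qed

lemma unitary_conj_cancel:
  assumes W: "unitary n W" and D: "D \<in> carrier_mat n n"
  shows "mat_adjoint W * (W * D * mat_adjoint W) * W = D"
proof -
  have c: "W \<in> carrier_mat n n" "mat_adjoint W \<in> carrier_mat n n"
    using W by (simp_all add: unitary_carrier)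
  then show ?thesis
    using W D by (simp add: assoc_mult_mat[of _ n n _ n _ n] unitary_cancel[OF W] unitary_def)
qed

lemma unitary_conj_eq_iff:
  assumes W: "unitary n W" and A: "A \<in> carrier_mat n n" and D: "D \<in> carrier_mat n n"
  shows "A = W * D * mat_adjoint W \<longleftrightarrow> mat_adjoint W * A * W = D"
  using unitary_conj_cancel[OF W D] unitary_conj_cancel[OF unitary_adjoint[OF W] A] by auto

lemma unitary_col_norm:
  assumes "unitary n U" "k < n"
  shows "(\<Sum>i<n. (cmod (U $$ (i,k)))\<^sup>2) = 1"
proof -
  have "(mat_adjoint U * U) $$ (k,k) = of_real (\<Sum>i<n. (cmod (U $$ (i,k)))\<^sup>2)"
    using assms by (subst diag_adjoint_mult_self) (simp_all add: unitary_carrier)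
  moreover have "(mat_adjoint U * U) $$ (k,k) = 1"
    using assms by (simp add: unitary_def)
  ultimately show ?thesis
    by (metis of_real_eq_1_iff)
qed

lemma unitary_row_norm:
  assumes "unitary n U" "i < n"
  shows "(\<Sum>k<n. (cmod (U $$ (i,k)))\<^sup>2) = 1"
  using unitary_col_norm[OF unitary_adjoint[OF assms(1)] assms(2)] assms unitary_carrier[OF assms(1)]
  by simp

lemma unitary_four_block_mat:
  assumes "unitary m W"
  shows "unitary (Suc m) (four_block_mat (1\<^sub>m 1) (0\<^sub>m 1 m) (0\<^sub>m m 1) W)"
proof (rule unitaryI)
  have W: "W \<in> carrier_mat m m" "mat_adjoint W * W = 1\<^sub>m m"
    using assms unfolding unitary_def by simp_all
  then show "four_block_mat (1\<^sub>m 1) (0\<^sub>m 1 m) (0\<^sub>m m 1) W \<in> carrier_mat (Suc m) (Suc m)"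
    using four_block_carrier_mat[OF one_carrier_mat[of 1] W(1)] by simp
  show "mat_adjoint (four_block_mat (1\<^sub>m 1) (0\<^sub>m 1 m) (0\<^sub>m m 1) W) *
      four_block_mat (1\<^sub>m 1) (0\<^sub>m 1 m) (0\<^sub>m m 1) W = 1\<^sub>m (Suc m)"
    by (subst mat_adjoint_four_block_mat[of _ 1 1 _ m _ m], use W in simp_all)
      (subst mult_four_block_mat[of _ 1 1 _ m _ m _ _ 1 _ m], use W in simp_all)
qed

lemma mult_smult_add_mult:
  fixes A B E F :: "complex mat"
  assumes "A \<in> carrier_mat n n" "B \<in> carrier_mat n n" "E \<in> carrier_mat n n" "F \<in> carrier_mat n n"
  shows "F * (c \<cdot>\<^sub>m (A + B)) * E = c \<cdot>\<^sub>m (F * A * E + F * B * E)"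
proof -
  have "F * (c \<cdot>\<^sub>m (A + B)) = c \<cdot>\<^sub>m (F * A + F * B)"
    using assms by (simp add: mult_smult_distrib[of F n n _ n] mult_add_distrib_mat[of F n n])
  then show ?thesis
    using assms by (simp add: mult_smult_assoc_mat[of _ n n E n] add_mult_distrib_mat[of _ n n _ E n])
qed

lemma mat_adjoint_mat_diag: "mat_adjoint (mat_diag n f) = mat_diag n (\<lambda>i. cnj (f i))"
  by (rule eq_matI) (simp_all add: mat_diag_def)

lemma unitary_mat_diag:
  assumes "\<And>i. i < n \<Longrightarrow> cnj (f i) * f i = 1"
  shows "unitary n (mat_diag n f)"
proof (rule unitaryI)
  have "mat_adjoint (mat_diag n f) * mat_diag n f = mat_diag n (\<lambda>i. cnj (f i) * f i)"
    by (simp add: mat_adjoint_mat_diag)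
  also have "\<dots> = 1\<^sub>m n"
    by (rule eq_matI) (simp_all add: mat_diag_def assms)
  finally show "mat_adjoint (mat_diag n f) * mat_diag n f = 1\<^sub>m n" .
qed simp

lemma mat_diag_conj_index:
  assumes "A \<in> carrier_mat n n" "a < n" "b < n"
  shows "(mat_diag n f * A * mat_adjoint (mat_diag n f)) $$ (a,b) = f a * cnj (f b) * A $$ (a,b)"
  using assms by (simp add: mat_adjoint_mat_diag mat_diag_mult_left mat_diag_mult_right[of _ n n])

section \<open>Spectral theorem for Hermitian matrices\<close>

lemma cscalar_prod_self:
  assumes "w \<in> carrier_vec n"
  shows "w \<bullet>c w = of_real (\<Sum>k<n. (cmod (w $ k))\<^sup>2)"
  using assms by (simp add: scalar_prod_def cnj_mult_self lessThan_atLeast0)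

lemma cscalar_prod_self_normalize:
  fixes w :: "complex vec"
  assumes "w \<in> carrier_vec n" "w \<bullet>c w \<noteq> 0"
  defines "c \<equiv> complex_of_real (1 / sqrt (Re (w \<bullet>c w)))"
  shows "c * c * (w \<bullet>c w) = 1"
proof -
  define r where "r = (\<Sum>k<n. (cmod (w $ k))\<^sup>2)"
  have w: "w \<bullet>c w = of_real r"
    unfolding r_def by (rule cscalar_prod_self[OF assms(1)])
  have "r \<ge> 0"
    unfolding r_def by (simp add: sum_nonneg)
  with assms(2) w have "r > 0"
    by simp
  with w show ?thesis
    unfolding c_def by (simp flip: of_real_mult add: field_simps)
qed

lemma unitary_normalized_cols:
  fixes ws :: "complex vec list"
  assumes ws: "set ws \<subseteq> carrier_vec n" "length ws = n" "corthogonal ws"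
  defines "c \<equiv> \<lambda>w. complex_of_real (1 / sqrt (Re (w \<bullet>c w)))"
  shows "unitary n (mat_of_cols n (map (\<lambda>w. c w \<cdot>\<^sub>v w) ws))"
proof (rule unitaryI)
  let ?N = "mat_of_cols n (map (\<lambda>w. c w \<cdot>\<^sub>v w) ws)"
  show N: "?N \<in> carrier_mat n n"
    by (metis length_map mat_of_cols_carrier(1) ws(2))
  have wsc: "ws ! i \<in> carrier_vec n" if "i < n" for i
    using ws that by auto
  have cnj_c: "cnj (c w) = c w" for w
    unfolding c_def by simp
  show "mat_adjoint ?N * ?N = 1\<^sub>m n"
  proof (rule eq_matI)
    fix i j assume "i < dim_row (1\<^sub>m n :: complex mat)" "j < dim_col (1\<^sub>m n :: complex mat)"
    then have i: "i < n" and j: "j < n" by simp_all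
    have "(mat_adjoint ?N * ?N) $$ (i,j) = (\<Sum>k\<in>{0..<n}. cnj (?N $$ (k,i)) * ?N $$ (k,j))"
      using ws(2) i j by (simp add: scalar_prod_def)
    also have "\<dots> = c (ws ! i) * c (ws ! j) * (ws ! j \<bullet>c ws ! i)"
      using ws i j wsc[OF i] wsc[OF j] cnj_c
      by (simp add: mat_of_cols_index scalar_prod_def sum_distrib_left algebra_simps)
    also have "\<dots> = 1\<^sub>m n $$ (i,j)"
      using corthogonalD[OF ws(3), of j i] cscalar_prod_self_normalize[OF wsc[OF i]] ws(2) i j
      unfolding c_def by (cases "i = j") simp_all
    finally show "(mat_adjoint ?N * ?N) $$ (i,j) = 1\<^sub>m n $$ (i,j)" .
  qed (use ws(2) in simp_all)
qed

lemma unitary_completion: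
  fixes v :: "complex vec"
  assumes v: "v \<in> carrier_vec n" "v \<noteq> 0\<^sub>v n"
  shows "\<exists>N c. unitary n N \<and> col N 0 = c \<cdot>\<^sub>v v"
proof -
  interpret cof_vec_space n "TYPE(complex)" .
  define b where "b = basis_completion v"
  define ws where "ws = gram_schmidt n b"
  from basis_completion[OF v, folded b_def]
  have b: "set b \<subseteq> carrier_vec n" "distinct b" "\<not> lin_dep (set b)" "hd b = v" "length b = n"
    by auto
  have n: "n > 0"
    using v by (cases n) auto
  then obtain vs where bv: "b = v # vs"
    using b(4,5) by (cases b) auto
  have ws: "set ws \<subseteq> carrier_vec n" "corthogonal ws" "length ws = n"
    using gram_schmidt_result[OF b(1-3) refl, folded ws_def] b(5) by auto
  have "hd ws = v"
    using gram_schmidt_hd[OF v(1), of vs] unfolding ws_def bv .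
  then have ws0: "ws ! 0 = v"
    using ws(3) n by (cases ws) auto
  define c where "c w = complex_of_real (1 / sqrt (Re (w \<bullet>c w)))" for w :: "complex vec"
  define N where "N = mat_of_cols n (map (\<lambda>w. c w \<cdot>\<^sub>v w) ws)"
  have "unitary n N"
    unfolding N_def c_def by (rule unitary_normalized_cols[OF ws(1,3,2)])
  moreover have "col N 0 = c v \<cdot>\<^sub>v v"
    using ws ws0 n v by (simp add: N_def)
  ultimately show ?thesis
    by blast
qed

lemma complex_mat_eigenvalue_exists:
  assumes A: "(A :: complex mat) \<in> carrier_mat (Suc m) (Suc m)"
  shows "\<exists>e. eigenvalue A e"
proof -
  have "degree (char_poly A) = Suc m"
    using degree_monic_char_poly[OF A] by simp
  then have "\<not> constant (poly (char_poly A))"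
    by (simp add: constant_degree)
  then obtain e where "poly (char_poly A) e = 0"
    using fundamental_theorem_of_algebra by blast
  then show ?thesis
    using eigenvalue_root_char_poly[OF A] by blast
qed

lemma unitary_conj_first_col:
  fixes A N :: "complex mat"
  assumes N: "unitary n N" "col N 0 = c \<cdot>\<^sub>v v" and v: "v \<in> carrier_vec n"
    and A: "A \<in> carrier_mat n n" "A *\<^sub>v v = e \<cdot>\<^sub>v v" and i: "i < n"
  shows "(mat_adjoint N * A * N) $$ (i,0) = (if i = 0 then e else 0)"
proof -
  have Nc: "N \<in> carrier_mat n n"
    using N(1) by (rule unitary_carrier)
  have "col (A * N) 0 = A *\<^sub>v col N 0"
    by (rule col_mult2[OF A(1) Nc]) (use i in simp)
  also have "\<dots> = c \<cdot>\<^sub>v (A *\<^sub>v v)"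
    unfolding N(2) by (rule mult_mat_vec[OF A(1) v])
  also have "\<dots> = e \<cdot>\<^sub>v col N 0"
    unfolding A(2) N(2) by (metis smult_smult_assoc mult.commute)
  finally have AN: "col (A * N) 0 = e \<cdot>\<^sub>v col N 0" .
  have "(mat_adjoint N * A * N) $$ (i,0) = row (mat_adjoint N) i \<bullet> col (A * N) 0"
    using A Nc i by (simp add: assoc_mult_mat[of _ n n _ n _ n])
  also have "\<dots> = e * (mat_adjoint N * N) $$ (i,0)"
    using Nc i by (simp add: AN)
  also have "\<dots> = (if i = 0 then e else 0)"
    using N(1) i by (simp add: unitary_def)
  finally show ?thesis .
qed

lemma four_block_mat_first_row_col:
  fixes B :: "'a :: zero mat"
  assumes B: "B \<in> carrier_mat (Suc m) (Suc m)"
    and col0: "\<And>i. 0 < i \<Longrightarrow> i < Suc m \<Longrightarrow> B $$ (i,0) = 0"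
    and row0: "\<And>j. 0 < j \<Longrightarrow> j < Suc m \<Longrightarrow> B $$ (0,j) = 0"
  shows "B = four_block_mat (mat 1 1 (\<lambda>_. B $$ (0,0))) (0\<^sub>m 1 m) (0\<^sub>m m 1)
    (mat m m (\<lambda>(i,j). B $$ (Suc i, Suc j)))"
proof (rule eq_matI)
  fix i j assume "i < dim_row (four_block_mat (mat 1 1 (\<lambda>_. B $$ (0,0))) (0\<^sub>m 1 m) (0\<^sub>m m 1)
      (mat m m (\<lambda>(i,j). B $$ (Suc i, Suc j))))"
    "j < dim_col (four_block_mat (mat 1 1 (\<lambda>_. B $$ (0,0))) (0\<^sub>m 1 m) (0\<^sub>m m 1)
      (mat m m (\<lambda>(i,j). B $$ (Suc i, Suc j))))"
  then have "i < Suc m" "j < Suc m"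
    by simp_all
  then show "B $$ (i,j) = four_block_mat (mat 1 1 (\<lambda>_. B $$ (0,0))) (0\<^sub>m 1 m) (0\<^sub>m m 1)
      (mat m m (\<lambda>(i,j). B $$ (Suc i, Suc j))) $$ (i,j)"
    using col0 row0 by (cases i; cases j) simp_all
qed (use B in simp_all)

lemma hermitian_lower_right_submatrix:
  fixes B :: "complex mat"
  assumes B: "B \<in> carrier_mat (Suc m) (Suc m)" and hB: "mat_adjoint B = B"
  shows "mat_adjoint (mat m m (\<lambda>(i,j). B $$ (Suc i, Suc j))) = mat m m (\<lambda>(i,j). B $$ (Suc i, Suc j))"
proof (rule eq_matI)
  fix i j assume "i < dim_row (mat m m (\<lambda>(i,j). B $$ (Suc i, Suc j)))"
    "j < dim_col (mat m m (\<lambda>(i,j). B $$ (Suc i, Suc j)))"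
  then have "i < m" "j < m"
    by simp_all
  then show "mat_adjoint (mat m m (\<lambda>(i,j). B $$ (Suc i, Suc j))) $$ (i,j) =
      mat m m (\<lambda>(i,j). B $$ (Suc i, Suc j)) $$ (i,j)"
    using B arg_cong[OF hB, of "\<lambda>C. C $$ (Suc i, Suc j)"] by simp
qed simp_all

lemma hermitian_deflation:
  fixes A :: "complex mat"
  assumes A: "A \<in> carrier_mat (Suc m) (Suc m)" and hA: "mat_adjoint A = A"
  shows "\<exists>N e A'. unitary (Suc m) N \<and> A' \<in> carrier_mat m m \<and> mat_adjoint A' = A' \<and>
    mat_adjoint N * A * N = four_block_mat (mat 1 1 (\<lambda>_. e)) (0\<^sub>m 1 m) (0\<^sub>m m 1) A'"
proof -
  obtain e where "eigenvalue A e"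
    using complex_mat_eigenvalue_exists[OF A] by blast
  then have "\<exists>v. v \<in> carrier_vec (Suc m) \<and> v \<noteq> 0\<^sub>v (Suc m) \<and> A *\<^sub>v v = e \<cdot>\<^sub>v v"
    using A unfolding eigenvalue_def eigenvector_def by (simp add: carrier_matD)
  then obtain v where v: "v \<in> carrier_vec (Suc m)" "v \<noteq> 0\<^sub>v (Suc m)" "A *\<^sub>v v = e \<cdot>\<^sub>v v"
    by blast
  obtain N c where N: "unitary (Suc m) N" "col N 0 = c \<cdot>\<^sub>v v"
    using unitary_completion[OF v(1,2)] by blast
  have Nc: "N \<in> carrier_mat (Suc m) (Suc m)"
    using N(1) by (rule unitary_carrier)
  define B where "B = mat_adjoint N * A * N"
  have B: "B \<in> carrier_mat (Suc m) (Suc m)"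
    unfolding B_def using A Nc by (metis mat_adjoint_carrier mult_carrier_mat)
  have hB: "mat_adjoint B = B"
    unfolding B_def using A Nc hA
    by (simp add: mat_adjoint_mult[of _ "Suc m" "Suc m" _ "Suc m"] assoc_mult_mat[of _ "Suc m" "Suc m" _ "Suc m" _ "Suc m"])
  have col0: "B $$ (i,0) = (if i = 0 then e else 0)" if "i < Suc m" for i
    unfolding B_def by (rule unitary_conj_first_col[OF N v(1) A v(3) that])
  have row0: "B $$ (0,j) = 0" if "0 < j" "j < Suc m" for j
  proof -
    have "B $$ (0,j) = cnj (B $$ (j,0))"
      using hB B that by (metis carrier_matD mat_adjoint_index zero_less_Suc)
    then show ?thesis
      using col0[OF that(2)] that(1) by simp
  qed
  define A' where "A' = mat m m (\<lambda>(i,j). B $$ (Suc i, Suc j))"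
  have A': "A' \<in> carrier_mat m m"
    unfolding A'_def by simp
  have hA': "mat_adjoint A' = A'"
    unfolding A'_def by (rule hermitian_lower_right_submatrix[OF B hB])
  have "B = four_block_mat (mat 1 1 (\<lambda>_. B $$ (0,0))) (0\<^sub>m 1 m) (0\<^sub>m m 1) A'"
    unfolding A'_def using B col0 row0 by (intro four_block_mat_first_row_col) simp_all
  then show ?thesis
    using N(1) A' hA' unfolding B_def by blast
qed

lemma four_block_mat_unitary_conj:
  fixes E W D :: "complex mat"
  assumes E: "E \<in> carrier_mat 1 1" and W: "W \<in> carrier_mat m m" and D: "D \<in> carrier_mat m m"
  defines "B \<equiv> four_block_mat (1\<^sub>m 1) (0\<^sub>m 1 m) (0\<^sub>m m 1) W"
  shows "B * four_block_mat E (0\<^sub>m 1 m) (0\<^sub>m m 1) D * mat_adjoint B =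
    four_block_mat E (0\<^sub>m 1 m) (0\<^sub>m m 1) (W * D * mat_adjoint W)"
proof -
  have "W * D * mat_adjoint W \<in> carrier_mat m m"
    using W D by (simp add: mult_carrier_mat[of _ m m])
  then show ?thesis
    unfolding B_def using W D E
    by (subst mat_adjoint_four_block_mat[of _ 1 1 _ m _ m], simp_all,
        subst mult_four_block_mat[of _ 1 1 _ m _ m _ _ 1 _ m], simp_all,
        subst mult_four_block_mat[of _ 1 1 _ m _ m _ _ 1 _ m], simp_all add: left_add_zero_mat)
qed

lemma diagonal_four_block_mat:
  assumes "E \<in> carrier_mat 1 1" "D \<in> carrier_mat m m" "diagonal_mat D"
  shows "diagonal_mat (four_block_mat E (0\<^sub>m 1 m) (0\<^sub>m m 1) D)"
  unfolding diagonal_mat_def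
proof (intro allI impI)
  fix i j assume "i < dim_row (four_block_mat E (0\<^sub>m 1 m) (0\<^sub>m m 1) D)"
    "j < dim_col (four_block_mat E (0\<^sub>m 1 m) (0\<^sub>m m 1) D)" "i \<noteq> j"
  then show "four_block_mat E (0\<^sub>m 1 m) (0\<^sub>m m 1) D $$ (i,j) = 0"
    using assms unfolding diagonal_mat_def by (cases i; cases j) simp_all
qed

lemma mat_adjoint_mult_conj:
  fixes A B N :: "complex mat"
  assumes "N \<in> carrier_mat n n" "B \<in> carrier_mat n n" "A \<in> carrier_mat n n"
  shows "mat_adjoint (N * B) * A * (N * B) = mat_adjoint B * (mat_adjoint N * A * N) * B"
  using assms
  by (simp add: mat_adjoint_mult[of _ n n _ n] assoc_mult_mat[of _ n n _ n _ n] mult_carrier_mat[of _ n n])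

theorem hermitian_spectral_decomposition:
  fixes A :: "complex mat"
  assumes "A \<in> carrier_mat n n" "mat_adjoint A = A"
  shows "\<exists>W D. unitary n W \<and> D \<in> carrier_mat n n \<and> diagonal_mat D \<and> A = W * D * mat_adjoint W"
  using assms
proof (induction n arbitrary: A)
  case 0
  then show ?case
    by (intro exI[of _ "1\<^sub>m 0"] exI[of _ A]) (auto simp: unitary_def diagonal_mat_def)
next
  case (Suc m)
  note A = Suc.prems(1)
  obtain N e A' where N: "unitary (Suc m) N" and A': "A' \<in> carrier_mat m m" "mat_adjoint A' = A'"
    and NAN: "mat_adjoint N * A * N = four_block_mat (mat 1 1 (\<lambda>_. e)) (0\<^sub>m 1 m) (0\<^sub>m m 1) A'"
    using hermitian_deflation[OF Suc.prems] by blast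
  obtain W' D' where W': "unitary m W'" and D': "D' \<in> carrier_mat m m" "diagonal_mat D'"
    and A'_eq: "A' = W' * D' * mat_adjoint W'"
    using Suc.IH[OF A'] by blast
  define E where "E = mat 1 1 (\<lambda>_. e)"
  define B where "B = four_block_mat (1\<^sub>m 1) (0\<^sub>m 1 m) (0\<^sub>m m 1) W'"
  define D where "D = four_block_mat E (0\<^sub>m 1 m) (0\<^sub>m m 1) D'"
  have E: "E \<in> carrier_mat 1 1"
    unfolding E_def by simp
  have B: "unitary (Suc m) B"
    unfolding B_def by (rule unitary_four_block_mat[OF W'])
  have D: "D \<in> carrier_mat (Suc m) (Suc m)"
    using four_block_carrier_mat[OF E D'(1)] by (simp add: D_def)
  have "mat_adjoint N * A * N = B * D * mat_adjoint B"
    unfolding NAN E_def[symmetric] B_def D_def A'_eq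
    using four_block_mat_unitary_conj[OF E unitary_carrier[OF W'] D'(1)] by simp
  then have "mat_adjoint B * (mat_adjoint N * A * N) * B = D"
    using unitary_conj_cancel[OF B D] by simp
  then have "mat_adjoint (N * B) * A * (N * B) = D"
    using mat_adjoint_mult_conj[OF unitary_carrier[OF N] unitary_carrier[OF B] A] by simp
  moreover have "diagonal_mat D"
    unfolding D_def by (rule diagonal_four_block_mat[OF E D'])
  ultimately show ?case
    using unitary_conj_eq_iff[OF unitary_mult[OF N B] A D] unitary_mult[OF N B] D by blast
qed

section \<open>Pinching does not decrease the von Neumann entropy\<close>

definition eta :: "real \<Rightarrow> real" where
  "eta t = (if t > 0 then - t * log 2 t else 0)"

lemma proots_prod_linear: "proots (\<Prod>a \<leftarrow> as. [:- a, 1:]) = mset (as :: complex list)"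
proof (induction as)
  case (Cons a as)
  have "(0 :: complex poly) \<notin> set (map (\<lambda>a. [:- a, 1:]) as)"
    by (induction as) simp_all
  then have "(\<Prod>a \<leftarrow> as. [:- a, 1:]) \<noteq> (0 :: complex poly)"
    by (simp only: prod_list_zero_iff) simp
  then show ?case
    unfolding list.map prod_list.Cons by (subst proots_mult) (simp_all add: Cons.IH)
qed simp

lemma vn_entropy_unitary_diagonal:
  assumes W: "unitary n W" and D: "D \<in> carrier_mat n n" "diagonal_mat D"
  shows "vn_entropy (W * D * mat_adjoint W) = (\<Sum>k<n. eta (Re (D $$ (k,k))))"
proof -
  have "similar_mat_wit (W * D * mat_adjoint W) D W (mat_adjoint W)"
    using W D(1) unitary_carrier[OF W] unfolding similar_mat_wit_def unitary_def Let_def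
    by (simp add: mult_carrier_mat[of _ n n] carrier_matD)
  then have "similar_mat (W * D * mat_adjoint W) D"
    unfolding similar_mat_def by blast
  then have "char_poly (W * D * mat_adjoint W) = (\<Prod>a \<leftarrow> diag_mat D. [:- a, 1:])"
    using D char_poly_upper_triangular[OF D(1)]
    by (simp add: char_poly_similar upper_triangular_def diagonal_mat_def)
  then have "vn_entropy (W * D * mat_adjoint W) = (\<Sum>ev \<leftarrow> diag_mat D. eta (Re ev))"
    unfolding vn_entropy_def eta_def by (simp add: proots_prod_linear sum_mset_sum_list flip: mset_map)
  also have "\<dots> = (\<Sum>k<n. eta (Re (D $$ (k,k))))"
    using D(1) by (simp add: diag_mat_def sum_list_sum_nth lessThan_atLeast0)
  finally show ?thesis .
qed

lemma eta_le_tangent: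
  assumes m: "m > 0" and x: "x \<ge> 0"
  shows "eta x \<le> eta m - (ln m + 1) / ln 2 * (x - m)"
proof (cases "x = 0")
  case True
  then show ?thesis
    using m by (simp add: eta_def log_def field_simps)
next
  case False
  then have xp: "x > 0"
    using x by simp
  have "ln (m / x) \<le> m / x - 1"
    using m xp by (intro ln_le_minus_one) simp
  then have "x * (ln m - ln x) \<le> m - x"
    using m xp by (simp add: ln_div field_simps)
  then show ?thesis
    using m xp by (simp add: eta_def log_def field_simps)
qed

lemma eta_jensen:
  assumes "finite K" and p: "\<And>k. k \<in> K \<Longrightarrow> p k \<ge> 0" and "(\<Sum>k\<in>K. p k) = 1"
    and x: "\<And>k. k \<in> K \<Longrightarrow> x k \<ge> 0"
  shows "(\<Sum>k\<in>K. p k * eta (x k)) \<le> eta (\<Sum>k\<in>K. p k * x k)"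
proof -
  define m where "m = (\<Sum>k\<in>K. p k * x k)"
  have "m \<ge> 0"
    unfolding m_def using p x by (intro sum_nonneg) simp
  show ?thesis
  proof (cases "m = 0")
    case True
    then have zero: "p k = 0 \<or> x k = 0" if "k \<in> K" for k
      using sum_nonneg_eq_0_iff[OF \<open>finite K\<close>, of "\<lambda>k. p k * x k"] p x that unfolding m_def by simp
    have "p k * eta (x k) = 0" if "k \<in> K" for k
      using zero[OF that] by (auto simp: eta_def)
    then show ?thesis
      using True unfolding m_def by (simp add: eta_def)
  next
    case False
    with \<open>m \<ge> 0\<close> have "m > 0"
      by simp
    define c where "c = (ln m + 1) / ln 2"
    have "(\<Sum>k\<in>K. p k * eta (x k)) \<le> (\<Sum>k\<in>K. p k * (eta m - c * (x k - m)))"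
      using eta_le_tangent[OF \<open>m > 0\<close> x] p unfolding c_def by (intro sum_mono mult_left_mono) simp_all
    also have "\<dots> = eta m * (\<Sum>k\<in>K. p k) - c * (\<Sum>k\<in>K. p k * x k) + c * m * (\<Sum>k\<in>K. p k)"
      by (simp add: algebra_simps sum.distrib sum_subtractf sum_distrib_left)
    also have "\<dots> = eta m"
      using assms(3) unfolding m_def by simp
    finally show ?thesis
      unfolding m_def .
  qed
qed

lemma sum_eta_le_doubly_stochastic:
  fixes P :: "nat \<Rightarrow> nat \<Rightarrow> real" and lam :: "nat \<Rightarrow> real"
  assumes P: "\<And>i k. P i k \<ge> 0"
    and rows: "\<And>i. i < n \<Longrightarrow> (\<Sum>k<n. P i k) = 1"
    and cols: "\<And>k. k < n \<Longrightarrow> (\<Sum>i<n. P i k) = 1"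
    and lam: "\<And>k. k < n \<Longrightarrow> lam k \<ge> 0"
  shows "(\<Sum>k<n. eta (lam k)) \<le> (\<Sum>i<n. eta (\<Sum>k<n. P i k * lam k))"
proof -
  have "(\<Sum>k<n. eta (lam k)) = (\<Sum>k<n. (\<Sum>i<n. P i k) * eta (lam k))"
    using cols by simp
  also have "\<dots> = (\<Sum>i<n. \<Sum>k<n. P i k * eta (lam k))"
    unfolding sum_distrib_right by (rule sum.swap)
  also have "\<dots> \<le> (\<Sum>i<n. eta (\<Sum>k<n. P i k * lam k))"
    using P rows lam by (intro sum_mono eta_jensen) auto
  finally show ?thesis .
qed

lemma diag_conj_diagonal_mat:
  fixes Q L :: "complex mat"
  assumes Q: "Q \<in> carrier_mat n n" and L: "L \<in> carrier_mat n n" "diagonal_mat L" and i: "i < n"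
  shows "(Q * L * mat_adjoint Q) $$ (i,i) = (\<Sum>k<n. of_real ((cmod (Q $$ (i,k)))\<^sup>2) * L $$ (k,k))"
proof -
  have QL: "(Q * L) $$ (i,k) = Q $$ (i,k) * L $$ (k,k)" if "k < n" for k
  proof -
    have "(Q * L) $$ (i,k) = (\<Sum>l\<in>{0..<n}. Q $$ (i,l) * L $$ (l,k))"
      using Q L i that by (simp add: scalar_prod_def)
    also have "\<dots> = (\<Sum>l\<in>{0..<n}. if l = k then Q $$ (i,k) * L $$ (k,k) else 0)"
      by (rule sum.cong) (use L that in \<open>auto simp: diagonal_mat_def\<close>)
    finally show ?thesis
      using that by simp
  qed
  have "(Q * L * mat_adjoint Q) $$ (i,i) = (\<Sum>k\<in>{0..<n}. (Q * L) $$ (i,k) * cnj (Q $$ (i,k)))"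
    using Q L i by (simp add: scalar_prod_def)
  also have "\<dots> = (\<Sum>k<n. of_real ((cmod (Q $$ (i,k)))\<^sup>2) * L $$ (k,k))"
    unfolding lessThan_atLeast0 by (rule sum.cong) (simp_all add: QL cnj_mult_self algebra_simps)
  finally show ?thesis .
qed

lemma gram_diagonalization_nonneg:
  fixes G L :: "complex mat"
  assumes G: "G \<in> carrier_mat p n" and W: "unitary n W" and L: "L \<in> carrier_mat n n"
    and eq: "mat_adjoint G * G = W * L * mat_adjoint W" and k: "k < n"
  shows "L $$ (k,k) = of_real (Re (L $$ (k,k)))" "Re (L $$ (k,k)) \<ge> 0"
proof -
  have Wc: "W \<in> carrier_mat n n"
    using W by (rule unitary_carrier)
  have "L = mat_adjoint W * (mat_adjoint G * G) * W"
    using unitary_conj_eq_iff[OF W _ L] eq G by (metis mat_adjoint_carrier mult_carrier_mat)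
  also have "\<dots> = (mat_adjoint W * mat_adjoint G) * G * W"
    using G Wc by (simp add: assoc_mult_mat[of "mat_adjoint W" n n "mat_adjoint G" p G n])
  also have "\<dots> = mat_adjoint (G * W) * (G * W)"
    using G Wc by (metis assoc_mult_mat mat_adjoint_carrier mat_adjoint_mult mult_carrier_mat)
  finally have "L $$ (k,k) = of_real (\<Sum>l<p. (cmod ((G * W) $$ (l,k)))\<^sup>2)"
    using diag_adjoint_mult_self[of "G * W" p n k] G Wc k by simp
  then show "L $$ (k,k) = of_real (Re (L $$ (k,k)))" "Re (L $$ (k,k)) \<ge> 0"
    by (simp_all add: sum_nonneg)
qed

lemma pinching_diag_unitary_conj:
  fixes \<rho> E V W L :: "complex mat"
  assumes E: "unitary n E" and V: "unitary n V" and W: "unitary n W"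
    and L: "L \<in> carrier_mat n n" "diagonal_mat L" and \<rho>: "\<rho> = W * L * mat_adjoint W"
    and M: "M \<in> carrier_mat n n" "(1/2) \<cdot>\<^sub>m (\<rho> + V * \<rho> * mat_adjoint V) = E * M * mat_adjoint E"
    and i: "i < n"
  defines "Q \<equiv> mat_adjoint E * W" and "Q' \<equiv> mat_adjoint E * V * W"
  shows "M $$ (i,i) =
    (\<Sum>k<n. of_real (((cmod (Q $$ (i,k)))\<^sup>2 + (cmod (Q' $$ (i,k)))\<^sup>2) / 2) * L $$ (k,k))"
proof -
  have c: "E \<in> carrier_mat n n" "mat_adjoint E \<in> carrier_mat n n" "V \<in> carrier_mat n n"
    "W \<in> carrier_mat n n"
    using E V W by (simp_all add: unitary_carrier)
  then have Qc: "Q \<in> carrier_mat n n" "Q' \<in> carrier_mat n n"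
    unfolding Q_def Q'_def by (simp_all add: mult_carrier_mat[of _ n n])
  have "(1/2) \<cdot>\<^sub>m (\<rho> + V * \<rho> * mat_adjoint V) \<in> carrier_mat n n"
    using c L unfolding \<rho> by (simp add: mult_carrier_mat[of _ n n])
  then have "M = mat_adjoint E * ((1/2) \<cdot>\<^sub>m (\<rho> + V * \<rho> * mat_adjoint V)) * E"
    using unitary_conj_eq_iff[OF E _ M(1)] M(2) by (metis (no_types))
  also have "\<dots> = (1/2) \<cdot>\<^sub>m (mat_adjoint E * \<rho> * E + mat_adjoint E * (V * \<rho> * mat_adjoint V) * E)"
    unfolding \<rho> by (rule mult_smult_add_mult[where n = n]) (use c L in \<open>simp_all add: mult_carrier_mat[of _ n n]\<close>)
  also have "mat_adjoint E * \<rho> * E = Q * L * mat_adjoint Q"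
    using c L unfolding \<rho> Q_def
    by (simp add: mult_carrier_mat[of _ n n] assoc_mult_mat[of _ n n _ n _ n] mat_adjoint_mult[of _ n n _ n])
  also have "mat_adjoint E * (V * \<rho> * mat_adjoint V) * E = Q' * L * mat_adjoint Q'"
    using c L unfolding \<rho> Q'_def
    by (simp add: mult_carrier_mat[of _ n n] assoc_mult_mat[of _ n n _ n _ n] mat_adjoint_mult[of _ n n _ n])
  finally have "M $$ (i,i) = ((Q * L * mat_adjoint Q) $$ (i,i) + (Q' * L * mat_adjoint Q') $$ (i,i)) / 2"
    using i Qc L by (simp add: mult_carrier_mat[of _ n n])
  also have "\<dots> = (\<Sum>k<n. (of_real ((cmod (Q $$ (i,k)))\<^sup>2) * L $$ (k,k)
      + of_real ((cmod (Q' $$ (i,k)))\<^sup>2) * L $$ (k,k)) / 2)"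
    unfolding diag_conj_diagonal_mat[OF Qc(1) L i] diag_conj_diagonal_mat[OF Qc(2) L i]
    by (simp only: sum_divide_distrib[symmetric] sum.distrib)
  also have "\<dots> = (\<Sum>k<n. of_real (((cmod (Q $$ (i,k)))\<^sup>2 + (cmod (Q' $$ (i,k)))\<^sup>2) / 2) * L $$ (k,k))"
    by (rule sum.cong) (simp_all add: field_simps)
  finally show ?thesis .
qed

lemma pinching_hermitian:
  fixes \<rho> V :: "complex mat"
  assumes \<rho>: "\<rho> \<in> carrier_mat n n" "mat_adjoint \<rho> = \<rho>" and V: "V \<in> carrier_mat n n"
  shows "(1/2) \<cdot>\<^sub>m (\<rho> + V * \<rho> * mat_adjoint V) \<in> carrier_mat n n"
    "mat_adjoint ((1/2) \<cdot>\<^sub>m (\<rho> + V * \<rho> * mat_adjoint V)) = (1/2) \<cdot>\<^sub>m (\<rho> + V * \<rho> * mat_adjoint V)"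
  using \<rho> V
  by (simp_all add: mult_carrier_mat[of _ n n] mat_adjoint_smult mat_adjoint_add[of _ n n]
      mat_adjoint_mult[of _ n n _ n] assoc_mult_mat[of _ n n _ n _ n])

theorem vn_entropy_le_pinching:
  fixes G V :: "complex mat"
  assumes G: "G \<in> carrier_mat p n" and V: "unitary n V"
  defines "\<rho> \<equiv> mat_adjoint G * G"
  shows "vn_entropy \<rho> \<le> vn_entropy ((1/2) \<cdot>\<^sub>m (\<rho> + V * \<rho> * mat_adjoint V))"
proof -
  define X where "X = (1/2) \<cdot>\<^sub>m (\<rho> + V * \<rho> * mat_adjoint V)"
  have \<rho>c: "\<rho> \<in> carrier_mat n n" and h\<rho>: "mat_adjoint \<rho> = \<rho>"
    unfolding \<rho>_def using G by (simp_all add: mult_carrier_mat[of _ n p] mat_adjoint_mult[of _ n p _ n])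
  have Xc: "X \<in> carrier_mat n n" and hX: "mat_adjoint X = X"
    unfolding X_def using pinching_hermitian[OF \<rho>c h\<rho> unitary_carrier[OF V]] by simp_all
  obtain W L where W: "unitary n W" and L: "L \<in> carrier_mat n n" "diagonal_mat L"
    and \<rho>W: "\<rho> = W * L * mat_adjoint W"
    using hermitian_spectral_decomposition[OF \<rho>c h\<rho>] by blast
  obtain E M where E: "unitary n E" and M: "M \<in> carrier_mat n n" "diagonal_mat M"
    and XE: "X = E * M * mat_adjoint E"
    using hermitian_spectral_decomposition[OF Xc hX] by blast
  define lam where "lam k = Re (L $$ (k,k))" for k
  have Lkk: "L $$ (k,k) = of_real (lam k)" "lam k \<ge> 0" if "k < n" for k
    using gram_diagonalization_nonneg[OF G W L(1) _ that] \<rho>W unfolding \<rho>_def lam_def by simp_all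
  define Q where "Q = mat_adjoint E * W"
  define Q' where "Q' = mat_adjoint E * V * W"
  have Q: "unitary n Q" "unitary n Q'"
    unfolding Q_def Q'_def by (intro unitary_mult unitary_adjoint E V W)+
  define P where "P i k = ((cmod (Q $$ (i,k)))\<^sup>2 + (cmod (Q' $$ (i,k)))\<^sup>2) / 2" for i k
  have M_diag: "Re (M $$ (i,i)) = (\<Sum>k<n. P i k * lam k)" if "i < n" for i
  proof -
    have "M $$ (i,i) = (\<Sum>k<n. of_real (P i k) * L $$ (k,k))"
      unfolding P_def Q_def Q'_def by (rule pinching_diag_unitary_conj[OF E V W L \<rho>W M(1) XE[unfolded X_def] that])
    then show ?thesis
      by (simp add: Lkk)
  qed
  have "vn_entropy \<rho> = (\<Sum>k<n. eta (lam k))"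
    unfolding \<rho>W lam_def by (rule vn_entropy_unitary_diagonal[OF W L])
  also have "\<dots> \<le> (\<Sum>i<n. eta (\<Sum>k<n. P i k * lam k))"
    by (rule sum_eta_le_doubly_stochastic)
      (simp_all add: P_def Lkk unitary_row_norm[OF Q(1)] unitary_row_norm[OF Q(2)]
        unitary_col_norm[OF Q(1)] unitary_col_norm[OF Q(2)] sum.distrib sum_divide_distrib[symmetric])
  also have "\<dots> = vn_entropy X"
    unfolding XE using vn_entropy_unitary_diagonal[OF E M] M_diag by simp
  finally show ?thesis
    unfolding X_def .
qed

section \<open>Reduced states of the two-qubit gate\<close>

lemma sum_lessThan_2: "(\<Sum>j<(2::nat). h j) = h 0 + h 1"
  by (simp add: numeral_2_eq_2)

lemma sum_lessThan_4: "(\<Sum>j<(4::nat). h j) = h 0 + h 1 + h 2 + h 3"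
  by (simp add: eval_nat_numeral)

lemma sum_lessThan_mult_div_mod:
  fixes m k :: nat
  shows "(\<Sum>l<k * m. h (l div m) (l mod m)) = (\<Sum>a<k. \<Sum>r<m. h a r)"
proof -
  have "(\<Sum>l<k * m. h (l div m) (l mod m)) = (\<Sum>a<k. \<Sum>l\<in>{0 + a * m..<m + a * m}. h (l div m) (l mod m))"
    by (simp add: sum.nat_group[symmetric] add.commute)
  also have "\<dots> = (\<Sum>a<k. \<Sum>r<m. h a r)"
  proof (rule sum.cong[OF refl])
    fix a
    show "(\<Sum>l\<in>{0 + a * m..<m + a * m}. h (l div m) (l mod m)) = (\<Sum>r<m. h a r)"
      unfolding sum.shift_bounds_nat_ivl lessThan_atLeast0 by (rule sum.cong) auto
  qed
  finally show ?thesis .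
qed

(* Row l stands for the basis vector |l div m, l mod m> of A R_A. *)
definition reduced_BR_factor :: "nat \<Rightarrow> nat \<Rightarrow> (nat \<Rightarrow> nat \<Rightarrow> nat \<Rightarrow> nat \<Rightarrow> complex) \<Rightarrow> complex mat" where
  "reduced_BR_factor m n chi = mat (2*m) (2*n) (\<lambda>(l,i). cnj (chi (l div m) (l mod m) (i div n) (i mod n)))"

lemma reduced_BR_gram:
  "reduced_BR m n chi = mat_adjoint (reduced_BR_factor m n chi) * reduced_BR_factor m n chi"
proof (rule eq_matI)
  let ?G = "reduced_BR_factor m n chi"
  fix i j assume "i < dim_row (mat_adjoint ?G * ?G)" "j < dim_col (mat_adjoint ?G * ?G)"
  then have ij: "i < 2 * n" "j < 2 * n"
    by (simp_all add: reduced_BR_factor_def)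
  have "reduced_BR m n chi $$ (i,j) =
      (\<Sum>a<2. \<Sum>r<m. chi a r (i div n) (i mod n) * cnj (chi a r (j div n) (j mod n)))"
    using ij by (simp add: reduced_BR_def)
  also have "\<dots> = (\<Sum>l<2 * m. chi (l div m) (l mod m) (i div n) (i mod n) *
      cnj (chi (l div m) (l mod m) (j div n) (j mod n)))"
    by (rule sum_lessThan_mult_div_mod[symmetric])
  also have "\<dots> = (mat_adjoint ?G * ?G) $$ (i,j)"
    using ij by (simp add: reduced_BR_factor_def scalar_prod_def lessThan_atLeast0)
  finally show "reduced_BR m n chi $$ (i,j) = (mat_adjoint ?G * ?G) $$ (i,j)" .
qed (simp_all add: reduced_BR_def reduced_BR_factor_def)

lemma Uent_odd_parity:
  assumes "a < 2" "b < 2" "a' < 2" "b' < 2" "odd (a + b + a' + b')"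
  shows "Uent x y z a b a' b' = 0"
proof -
  have "a = 0 \<or> a = 1" "b = 0 \<or> b = 1" "a' = 0 \<or> a' = 1" "b' = 0 \<or> b' = 1"
    using assms by auto
  then show ?thesis
    using assms(5) by (auto simp: Uent_def pauli_def sum_lessThan_4)
qed

(* Amplitude of U (|a'>_A (x) g) at |a>_A |b, s>_{B R_B}. *)
definition out_basis :: "real \<Rightarrow> real \<Rightarrow> real \<Rightarrow> (nat \<Rightarrow> nat \<Rightarrow> complex) \<Rightarrow> nat \<Rightarrow> nat \<Rightarrow> nat \<Rightarrow> nat \<Rightarrow> complex" where
  "out_basis x y z g a' a b s = (\<Sum>b'<2. Uent x y z a b a' b' * g b' s)"

definition reduced_A :: "nat \<Rightarrow> (nat \<Rightarrow> nat \<Rightarrow> complex) \<Rightarrow> nat \<Rightarrow> nat \<Rightarrow> complex" where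
  "reduced_A m f a1 a2 = (\<Sum>r<m. f a1 r * cnj (f a2 r))"

lemma out_state_eq_out_basis:
  "out_state x y z f g a r b s = (\<Sum>a'<2. out_basis x y z g a' a b s * f a' r)"
  unfolding out_state_def out_basis_def by (simp add: sum_lessThan_2 algebra_simps)

lemma reduced_BR_out_state:
  assumes "i < 2 * n" "j < 2 * n"
  shows "reduced_BR m n (out_state x y z f g) $$ (i,j) =
    (\<Sum>a<2. \<Sum>a1<2. \<Sum>a2<2. out_basis x y z g a1 a (i div n) (i mod n)
       * cnj (out_basis x y z g a2 a (j div n) (j mod n)) * reduced_A m f a1 a2)"
  using assms unfolding reduced_BR_def out_state_eq_out_basis reduced_A_def
  by (simp add: sum_lessThan_2 sum_distrib_left sum_distrib_right sum.distrib algebra_simps)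

lemma out_basis_phi_odd_parity:
  assumes "a' < 2" "a < 2" "b < 2" "s < 2" "odd (a' + a + b + s)"
  shows "out_basis x y z (phi_state \<beta>) a' a b s = 0"
proof -
  have "Uent x y z a b a' s = 0"
    using assms by (intro Uent_odd_parity) (simp_all add: ac_simps)
  moreover have "s = 0 \<or> s = 1"
    using assms by auto
  ultimately show ?thesis
    by (auto simp: out_basis_def sum_lessThan_2 phi_state_def)
qed

lemma out_basis_phi_mult_odd_parity:
  assumes "a < 2" "a1 < 2" "a2 < 2" "b1 < 2" "s1 < 2" "b2 < 2" "s2 < 2"
    and "odd (a1 + a2 + b1 + s1 + b2 + s2)"
  shows "out_basis x y z (phi_state \<beta>) a1 a b1 s1 * cnj (out_basis x y z (phi_state \<beta>) a2 a b2 s2) = 0"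
proof (cases "odd (a1 + a + b1 + s1)")
  case True
  then show ?thesis
    using assms out_basis_phi_odd_parity by simp
next
  case False
  then have "odd (a2 + a + b2 + s2)"
    using assms(8) by presburger
  then show ?thesis
    using assms out_basis_phi_odd_parity by simp
qed

lemma reduced_A_psi_state:
  "reduced_A 2 (psi_state \<alpha> \<theta> \<mu>) 0 0 = (cos \<alpha>)\<^sup>2"
  "reduced_A 2 (psi_state \<alpha> \<theta> \<mu>) 1 1 = (sin \<alpha>)\<^sup>2"
proof -
  show "reduced_A 2 (psi_state \<alpha> \<theta> \<mu>) 0 0 = (cos \<alpha>)\<^sup>2"
    by (simp add: reduced_A_def sum_lessThan_2 psi_state_def power2_eq_square)
  have "reduced_A 2 (psi_state \<alpha> \<theta> \<mu>) 1 1 =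
      of_real (sin \<alpha> * cos \<mu>) * of_real (sin \<alpha> * cos \<mu>) * (cis \<theta> * cnj (cis \<theta>))
      + of_real (sin \<alpha> * sin \<mu>) * of_real (sin \<alpha> * sin \<mu>)"
    by (simp add: reduced_A_def sum_lessThan_2 psi_state_def)
  also have "\<dots> = of_real ((sin \<alpha> * cos \<mu>)\<^sup>2 + (sin \<alpha> * sin \<mu>)\<^sup>2)"
    unfolding cnj_mult_self by (simp add: power2_eq_square algebra_simps)
  also have "(sin \<alpha> * cos \<mu>)\<^sup>2 + (sin \<alpha> * sin \<mu>)\<^sup>2 = (sin \<alpha>)\<^sup>2"
    by (simp add: power_mult_distrib flip: distrib_left)
  finally show "reduced_A 2 (psi_state \<alpha> \<theta> \<mu>) 1 1 = (sin \<alpha>)\<^sup>2"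
    by simp
qed

lemma reduced_A_phi_state:
  "reduced_A 2 (phi_state \<alpha>) 0 0 = (cos \<alpha>)\<^sup>2" "reduced_A 2 (phi_state \<alpha>) 1 1 = (sin \<alpha>)\<^sup>2"
  "reduced_A 2 (phi_state \<alpha>) 0 1 = 0" "reduced_A 2 (phi_state \<alpha>) 1 0 = 0"
  by (simp_all add: reduced_A_def sum_lessThan_2 phi_state_def power2_eq_square)

lemma reduced_BR_phi_state_entry:
  assumes ij: "i < 4" "j < 4"
  shows "reduced_BR 2 2 (out_state x y z (phi_state \<alpha>) (phi_state \<beta>)) $$ (i,j) =
    (if even (i div 2 + i mod 2 + j div 2 + j mod 2)
     then reduced_BR 2 2 (out_state x y z (psi_state \<alpha> \<theta> \<mu>) (phi_state \<beta>)) $$ (i,j) else 0)"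
proof -
  let ?T = "out_basis x y z (phi_state \<beta>)" and ?par = "i div 2 + i mod 2 + j div 2 + j mod 2"
  have lt: "i div 2 < 2" "i mod 2 < 2" "j div 2 < 2" "j mod 2 < 2"
    using ij by auto
  \<comment> \<open>coherent terms (\<open>a1 \<noteq> a2\<close>) survive only for even parity, incoherent ones only for odd parity\<close>
  have summand: "?T a1 a (i div 2) (i mod 2) * cnj (?T a2 a (j div 2) (j mod 2)) * reduced_A 2 (phi_state \<alpha>) a1 a2 =
      (if even ?par
       then ?T a1 a (i div 2) (i mod 2) * cnj (?T a2 a (j div 2) (j mod 2)) * reduced_A 2 (psi_state \<alpha> \<theta> \<mu>) a1 a2
       else 0)"
    if a: "a < 2" "a1 < 2" "a2 < 2" for a a1 a2
  proof (cases "a1 = a2")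
    case True
    have "reduced_A 2 (phi_state \<alpha>) a1 a2 = reduced_A 2 (psi_state \<alpha> \<theta> \<mu>) a1 a2"
      using True a(2) by (auto simp: less_2_cases_iff reduced_A_phi_state reduced_A_psi_state
          reduced_A_phi_state[unfolded One_nat_def] reduced_A_psi_state[unfolded One_nat_def])
    moreover have "odd ?par \<Longrightarrow> ?T a1 a (i div 2) (i mod 2) * cnj (?T a2 a (j div 2) (j mod 2)) = 0"
      using True by (intro out_basis_phi_mult_odd_parity[OF a lt]) presburger
    ultimately show ?thesis
      by auto
  next
    case False
    have "reduced_A 2 (phi_state \<alpha>) a1 a2 = 0"
      using False a(2,3) by (auto simp: less_2_cases_iff reduced_A_phi_state[unfolded One_nat_def])
    moreover have "even ?par \<Longrightarrow> ?T a1 a (i div 2) (i mod 2) * cnj (?T a2 a (j div 2) (j mod 2)) = 0"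
      using False a(2,3) by (intro out_basis_phi_mult_odd_parity[OF a lt]) presburger
    ultimately show ?thesis
      by auto
  qed
  show ?thesis
    by (cases "even ?par") (use ij in \<open>simp_all add: reduced_BR_out_state summand\<close>)
qed

(* The sign (-1)^(b + s) at the basis index i = 2 b + s of B R_B. *)
definition parity_sign :: "nat \<Rightarrow> complex" where
  "parity_sign i = (if even (i div 2 + i mod 2) then 1 else -1)"

lemma reduced_BR_phi_state_pinching:
  fixes x y z \<alpha> \<beta> \<theta> \<mu> :: real
  defines "\<rho> \<equiv> reduced_BR 2 2 (out_state x y z (psi_state \<alpha> \<theta> \<mu>) (phi_state \<beta>))"
  shows "reduced_BR 2 2 (out_state x y z (phi_state \<alpha>) (phi_state \<beta>)) =
    (1/2) \<cdot>\<^sub>m (\<rho> + mat_diag 4 parity_sign * \<rho> * mat_adjoint (mat_diag 4 parity_sign))"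
proof (rule eq_matI)
  have \<rho>: "\<rho> \<in> carrier_mat 4 4"
    by (simp add: \<rho>_def reduced_BR_def)
  fix i j assume "i < dim_row ((1/2) \<cdot>\<^sub>m (\<rho> + mat_diag 4 parity_sign * \<rho> * mat_adjoint (mat_diag 4 parity_sign)))"
    "j < dim_col ((1/2) \<cdot>\<^sub>m (\<rho> + mat_diag 4 parity_sign * \<rho> * mat_adjoint (mat_diag 4 parity_sign)))"
  then have ij: "i < 4" "j < 4"
    using \<rho> by (simp_all add: mat_diag_def)
  have "parity_sign i * cnj (parity_sign j) = (if even (i div 2 + i mod 2 + j div 2 + j mod 2) then 1 else -1)"
    by (auto simp: parity_sign_def)
  then show "reduced_BR 2 2 (out_state x y z (phi_state \<alpha>) (phi_state \<beta>)) $$ (i,j) =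
      ((1/2) \<cdot>\<^sub>m (\<rho> + mat_diag 4 parity_sign * \<rho> * mat_adjoint (mat_diag 4 parity_sign))) $$ (i,j)"
    using ij \<rho> mat_diag_conj_index[OF \<rho> ij, of parity_sign]
    unfolding reduced_BR_phi_state_entry[OF ij, of x y z \<alpha> \<beta> \<theta> \<mu>, folded \<rho>_def]
    by (simp add: carrier_matD mat_diag_def)
qed (simp_all add: reduced_BR_def \<rho>_def mat_diag_def)

lemma ent_out_psi_state_le_phi_state:
  "ent_out x y z 2 2 (psi_state \<alpha> \<theta> \<mu>) (phi_state \<beta>) \<le> ent_out x y z 2 2 (phi_state \<alpha>) (phi_state \<beta>)"
  unfolding ent_out_def reduced_BR_phi_state_pinching[of x y z \<alpha> \<beta> \<theta> \<mu>]
    reduced_BR_gram[of 2 2 "out_state x y z (psi_state \<alpha> \<theta> \<mu>) (phi_state \<beta>)"]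
  by (rule vn_entropy_le_pinching)
    (auto simp: reduced_BR_factor_def parity_sign_def intro!: unitary_mat_diag)

lemma unit_state_phi_state: "unit_state 2 (phi_state \<beta>)"
  by (simp add: unit_state_def sum_lessThan_2 phi_state_def)

theorem lemma3:
  fixes x y z \<alpha> \<beta> \<theta> \<mu> :: real
  assumes "normalized x y z"
    and "\<alpha> \<in> {0..pi/2}" and "\<beta> \<in> {0..pi/2}" and "\<theta> \<in> {0..<2*pi}" and "\<mu> \<in> {0<..pi/2}"
    and "\<forall>v\<in>ent_values x y z. v \<le> ent_out x y z 2 2 (psi_state \<alpha> \<theta> \<mu>) (phi_state \<beta>)"
  shows "\<exists>\<alpha>' \<beta>'. \<alpha>' \<in> {0..pi/2} \<and> \<beta>' \<in> {0..pi/2}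
           \<and> (\<forall>v\<in>ent_values x y z. v \<le> ent_out x y z 2 2 (phi_state \<alpha>') (phi_state \<beta>'))
           \<and> K_E x y z = ent_out x y z 2 2 (phi_state \<alpha>') (phi_state \<beta>')
           \<and> (\<forall>a\<in>{0..pi/2}. \<forall>b\<in>{0..pi/2}.
                ent_out x y z 2 2 (phi_state a) (phi_state b) \<le> ent_out x y z 2 2 (phi_state \<alpha>') (phi_state \<beta>'))"
proof -
  let ?v = "ent_out x y z 2 2 (phi_state \<alpha>) (phi_state \<beta>)"
  have attained: "ent_out x y z 2 2 (phi_state a) (phi_state b) \<in> ent_values x y z" for a b
    using unit_state_phi_state[of a] unit_state_phi_state[of b] unfolding ent_values_def
    by (intro CollectI exI[of _ 2] exI[of _ "phi_state a"] exI[of _ "phi_state b"]) simp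
  have upper: "\<forall>v\<in>ent_values x y z. v \<le> ?v"
    using assms(6) ent_out_psi_state_le_phi_state[of x y z \<alpha> \<theta> \<mu> \<beta>] by fastforce
  have "K_E x y z = ?v"
    unfolding K_E_def using attained[of \<alpha> \<beta>] upper by (intro cSup_eq_maximum) simp_all
  then show ?thesis
    using assms(2,3) upper attained by blast
qed

end
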